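(* Let $m\ge 2$ and let $T$ be any hierarchy of size $m$. Let $H^{(m)}(x)=\sum_{n\ge1}H^{(m)}_nx^n$, where $H^{(m)}_n$ is the number of isomorphism classes of hierarchies of size $n$ that do not contain a subhierarchy isomorphic to $T$, and let $\rho_m$ be the radius of convergence of $H^{(m)}(x)$. Then $$H^{(m)}(\rho_m)=\frac{1+\rho_m-\rho_m^m}{2},$$ where $H^{(m)}(\rho_m)=\sum_{n\ge1}H^{(m)}_n\rho_m^n$.
   Context: A hierarchy is a finite rooted unordered tree in which no vertex has exactly one child; its size is its number of leaves. For a vertex $v$ of a hierarchy, the subhierarchy at $v$ is the hierarchy induced by $v$ and all its descendants (with root $v$); a hierarchy contains $T$ as a subhierarchy if the subhierarchy at some vertex (possibly the root) is isomorphic to $T$ as a rooted tree. *)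

theory Defs
  imports "HOL-Analysis.Analysis" "HOL-Library.Multiset"
begin

text \<open>Rooted unordered finite trees, up to isomorphism: a node is the multiset
of its children's subtrees. Equality of htree values is exactly isomorphism
of rooted unordered trees.\<close>
datatype htree = HNode "htree multiset"

lemma htree_size_mem [termination_simp]:
  "z \<in># M \<Longrightarrow> f z < Suc (size_multiset f M)"
proof -
  assume "z \<in># M"
  then obtain N where "M = add_mset z N" by (blast dest: multi_member_split)
  then show ?thesis by simp
qed

text \<open>Number of leaves (the size of a hierarchy).\<close>
fun leaves :: "htree \<Rightarrow> nat" where
  "leaves (HNode M) = (if M = {#} then 1 else sum_mset (image_mset leaves M))"

fun is_hier :: "htree \<Rightarrow> bool" where
  "is_hier (HNode M) = (size M \<noteq> 1 \<and> (\<forall>t\<in>set_mset M. is_hier t))"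

fun subtrees :: "htree \<Rightarrow> htree set" where
  "subtrees (HNode M) = insert (HNode M) (\<Union>t\<in>set_mset M. subtrees t)"

definition contains_sub :: "htree \<Rightarrow> htree \<Rightarrow> bool" where
  "contains_sub t T \<longleftrightarrow> T \<in> subtrees t"

definition avoid_count :: "htree \<Rightarrow> nat \<Rightarrow> nat" where
  "avoid_count T n = card {t. is_hier t \<and> leaves t = n \<and> \<not> contains_sub t T}"

end

theory Submission
  imports Defs
begin

text \<open>
A hierarchy avoiding \<open>T\<close> is a leaf or a node whose children form a multiset of at least
two avoiding hierarchies, other than the children of \<open>T\<close>. With
\<open>G(x) = \<Sum>n. H\<^sub>n (- ln (1 - x\<^sup>n) - x\<^sup>n)\<close> the product of
\<open>1 / (1 - x ^ leaves t)\<close> over all avoiding \<open>t\<close> is \<open>exp (H(x) + G(x))\<close>, so inside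
the disc of convergence \<open>2 H = x - x\<^sup>m + exp (H + G) - 1\<close>; both inequalities are limits
of inequalities between finite truncations.

Moreover \<open>H(x)\<close> is the least \<open>y\<close> above the partial sum of degree \<open>m - 1\<close> with
\<open>x - x\<^sup>m + exp (y + G(x)) - 1 \<le> 2 y\<close>. If \<open>exp (H + G) > 2\<close>, a slightly smaller \<open>y\<close>
would qualify, so \<open>exp (H + G) \<le> 2\<close> and hence \<open>H \<le> 1\<close> below the radius \<open>\<rho>\<close>, which
makes \<open>H\<close> converge at \<open>\<rho>\<close>. If \<open>exp (H(\<rho>) + G(\<rho>)) < 2\<close>, a slightly larger \<open>y\<close>
satisfies the strict inequality at \<open>\<rho>\<close>, by continuity of \<open>G\<close> also at some \<open>x > \<rho>\<close>,
and \<open>H\<close> would converge beyond \<open>\<rho>\<close>. So \<open>exp (H(\<rho>) + G(\<rho>)) = 2\<close>, and the functional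
equation gives the value of \<open>H(\<rho>)\<close>.
\<close>

section \<open>Hierarchies\<close>

lemma leaves_ge_1: "1 \<le> leaves t"
proof (induction t)
  case (HNode M)
  show ?case
  proof (cases "M = {#}")
    case False
    then obtain a M' where "M = add_mset a M'" by (metis multiset_cases)
    with HNode show ?thesis by fastforce
  qed simp
qed

lemma count_le_leaves:
  assumes "M \<noteq> {#}"
  shows "count M c \<le> leaves (HNode M)"
proof -
  have "count M c \<le> (\<Sum>s\<in>#M. leaves s)"
  proof (induction M)
    case (add a M)
    then show ?case using leaves_ge_1[of a] by auto
  qed simp
  with assms show ?thesis by simp
qed

lemma leaves_child_less:
  assumes "is_hier (HNode M)" "c \<in># M"
  shows "leaves c < leaves (HNode M)"
proof -
  obtain M' where M: "M = add_mset c M'" using assms(2) by (metis multi_member_split)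
  with assms(1) obtain d M'' where "M' = add_mset d M''" by (metis is_hier.simps multiset_cases size_single)
  with M leaves_ge_1[of d] show ?thesis by simp
qed

lemma leaves_le_if_subtree: "s \<in> subtrees t \<Longrightarrow> leaves s \<le> leaves t"
proof (induction t arbitrary: s)
  case (HNode M)
  show ?case
  proof (cases "s = HNode M")
    case False
    then obtain c where c: "c \<in># M" "s \<in> subtrees c" using HNode.prems by auto
    then obtain M' where "M = add_mset c M'" by (metis multi_member_split)
    with HNode.IH c show ?thesis by fastforce
  qed simp
qed

lemma subtree_self: "t \<in> subtrees t"
  by (cases t) auto

lemma leaves_node_power:
  fixes x :: "'a::comm_monoid_mult"
  assumes "M \<noteq> {#}"
  shows "x ^ leaves (HNode M) = (\<Prod>s\<in>#M. x ^ leaves s)"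
proof -
  have "x ^ (\<Sum>s\<in>#M. leaves s) = (\<Prod>s\<in>#M. x ^ leaves s)"
    by (induction M) (simp_all add: power_add)
  with assms show ?thesis by simp
qed

lemma is_hier_node_size:
  assumes "is_hier (HNode M)" "M \<noteq> {#}"
  shows "2 \<le> size M"
proof -
  have "size M \<noteq> 0" "size M \<noteq> 1"
    using assms by auto
  then show ?thesis by linarith
qed

fun children :: "htree \<Rightarrow> htree multiset" where
  "children (HNode M) = M"

lemma power_leaves_less_1: "0 \<le> x \<Longrightarrow> x < 1 \<Longrightarrow> (x::real) ^ leaves t < 1"
  using leaves_ge_1[of t] by (simp add: power_less_one_iff)

lemma sum_leaf_and_nodes:
  fixes x :: real
  assumes "finite A" "{#} \<notin> A"
  shows "(\<Sum>t\<in>insert (HNode {#}) (HNode ` A). x ^ leaves t) = x + (\<Sum>M\<in>A. x ^ leaves (HNode M))"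
proof -
  have "HNode {#} \<notin> HNode ` A"
    using assms(2) by auto
  with assms(1) show ?thesis
    by (simp add: sum.reindex inj_on_def)
qed

section \<open>Multisets with bounded multiplicities\<close>

definition bounded_msets :: "'a set \<Rightarrow> nat \<Rightarrow> 'a multiset set" where
  "bounded_msets B J = {M. set_mset M \<subseteq> B \<and> (\<forall>x\<in>B. count M x < J)}"

lemma bij_betw_count_bounded_msets:
  assumes "finite B"
  shows "bij_betw (\<lambda>M. restrict (count M) B) (bounded_msets B J) (PiE B (\<lambda>_. {..<J}))"
proof (rule bij_betw_byWitness[where f' = "\<lambda>f. \<Sum>s\<in>B. replicate_mset (f s) s"])
  show "\<forall>M\<in>bounded_msets B J. (\<Sum>s\<in>B. replicate_mset (restrict (count M) B s) s) = M"
  proof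
    fix M assume M: "M \<in> bounded_msets B J"
    show "(\<Sum>s\<in>B. replicate_mset (restrict (count M) B s) s) = M"
    proof (rule multiset_eqI)
      fix x
      show "count (\<Sum>s\<in>B. replicate_mset (restrict (count M) B s) s) x = count M x"
        using M assms by (auto simp: bounded_msets_def count_sum count_replicate_mset sum.delta' not_in_iff)
    qed
  qed
  show "\<forall>f\<in>PiE B (\<lambda>_. {..<J}). restrict (count (\<Sum>s\<in>B. replicate_mset (f s) s)) B = f"
    using assms by (auto simp: count_sum count_replicate_mset PiE_def extensional_def fun_eq_iff)
  show "(\<lambda>M. restrict (count M) B) ` bounded_msets B J \<subseteq> PiE B (\<lambda>_. {..<J})"
    by (auto simp: bounded_msets_def)
  show "(\<lambda>f. \<Sum>s\<in>B. replicate_mset (f s) s) ` PiE B (\<lambda>_. {..<J}) \<subseteq> bounded_msets B J"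
  proof
    fix M assume "M \<in> (\<lambda>f. \<Sum>s\<in>B. replicate_mset (f s) s) ` PiE B (\<lambda>_. {..<J})"
    then obtain f where f: "f \<in> PiE B (\<lambda>_. {..<J})" and M: "M = (\<Sum>s\<in>B. replicate_mset (f s) s)"
      by blast
    show "M \<in> bounded_msets B J"
      using f assms unfolding M bounded_msets_def by (auto simp: set_mset_sum count_sum split: if_splits)
  qed
qed

lemma finite_bounded_msets: "finite B \<Longrightarrow> finite (bounded_msets B J)"
  using bij_betw_finite[OF bij_betw_count_bounded_msets] by (blast intro: finite_PiE)

lemma prod_mset_eq_prod_count:
  fixes z :: "'a \<Rightarrow> 'b::comm_monoid_mult"
  assumes "finite B" "set_mset M \<subseteq> B"
  shows "(\<Prod>s\<in>#M. z s) = (\<Prod>s\<in>B. z s ^ count M s)"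
  using assms(2)
proof (induction M)
  case (add a M)
  have "(\<Prod>s\<in>B. z s ^ count (add_mset a M) s) = (\<Prod>s\<in>B. z s ^ count M s * (if s = a then z s else 1))"
    by (intro prod.cong refl) (simp add: mult.commute)
  also have "\<dots> = (\<Prod>s\<in>B. z s ^ count M s) * z a"
    using add.prems assms(1) by (simp add: prod.distrib prod.delta)
  finally show ?case
    using add by (simp add: mult.commute)
qed simp

lemma sum_prod_mset_bounded_msets:
  fixes z :: "'a \<Rightarrow> 'b::comm_semiring_1"
  assumes "finite B"
  shows "(\<Sum>M\<in>bounded_msets B J. \<Prod>s\<in>#M. z s) = (\<Prod>s\<in>B. \<Sum>j<J. z s ^ j)"
proof -
  have "(\<Prod>s\<in>B. \<Sum>j<J. z s ^ j) = (\<Sum>f\<in>PiE B (\<lambda>_. {..<J}). \<Prod>s\<in>B. z s ^ f s)"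
    using assms by (rule prod_sum_PiE) simp
  also have "\<dots> = (\<Sum>M\<in>bounded_msets B J. \<Prod>s\<in>B. z s ^ restrict (count M) B s)"
    by (rule sum.reindex_bij_betw[OF bij_betw_count_bounded_msets[OF assms], symmetric])
  also have "\<dots> = (\<Sum>M\<in>bounded_msets B J. \<Prod>s\<in>#M. z s)"
    using assms by (intro sum.cong refl) (simp add: prod_mset_eq_prod_count bounded_msets_def)
  finally show ?thesis ..
qed

definition branching_msets :: "'a set \<Rightarrow> nat \<Rightarrow> 'a multiset set" where
  "branching_msets B J = {M \<in> bounded_msets B J. 2 \<le> size M}"

lemma sum_prod_mset_branching_msets:
  fixes z :: "'a \<Rightarrow> 'b::comm_ring_1"
  assumes "finite B" "2 \<le> J"
  shows "(\<Sum>M\<in>branching_msets B J. \<Prod>s\<in>#M. z s) = (\<Prod>s\<in>B. \<Sum>j<J. z s ^ j) - 1 - (\<Sum>s\<in>B. z s)"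
proof -
  have small: "{M \<in> bounded_msets B J. size M < 2} = insert {#} ((\<lambda>s. {#s#}) ` B)"
  proof (intro equalityI subsetI)
    fix M assume "M \<in> {M \<in> bounded_msets B J. size M < 2}"
    then show "M \<in> insert {#} ((\<lambda>s. {#s#}) ` B)"
      using size_1_singleton_mset[of M] by (auto simp: bounded_msets_def less_2_cases_iff)
  qed (use assms(2) in \<open>auto simp: bounded_msets_def\<close>)
  have "(\<Sum>M\<in>bounded_msets B J. \<Prod>s\<in>#M. z s)
      = (\<Sum>M\<in>bounded_msets B J \<inter> {M. size M < 2}. \<Prod>s\<in>#M. z s)
        + (\<Sum>M\<in>bounded_msets B J - {M. size M < 2}. \<Prod>s\<in>#M. z s)"
    using finite_bounded_msets[OF assms(1)] by (rule sum.Int_Diff)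
  also have "bounded_msets B J \<inter> {M. size M < 2} = insert {#} ((\<lambda>s. {#s#}) ` B)"
    using small by blast
  also have "bounded_msets B J - {M. size M < 2} = branching_msets B J"
    by (auto simp: branching_msets_def)
  also have "(\<Sum>M\<in>insert {#} ((\<lambda>s. {#s#}) ` B). \<Prod>s\<in>#M. z s) = 1 + (\<Sum>s\<in>B. z s)"
    using assms(1) by (subst sum.insert) (auto simp: sum.reindex inj_on_def)
  finally show ?thesis
    using sum_prod_mset_bounded_msets[OF assms(1), of z J] by (simp add: algebra_simps)
qed

lemma finite_branching_msets: "finite B \<Longrightarrow> finite (branching_msets B J)"
  unfolding branching_msets_def by (rule finite_subset[OF _ finite_bounded_msets]) auto

lemma empty_not_branching: "{#} \<notin> branching_msets B J"
  by (simp add: branching_msets_def)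

lemma finite_hierarchies: "finite {t. is_hier t \<and> leaves t \<le> N}"
proof (induction N)
  case 0
  have "{t. is_hier t \<and> leaves t \<le> 0} = {}"
    using leaves_ge_1 le_trans not_one_le_zero by blast
  then show ?case by (metis finite.emptyI)
next
  case (Suc N)
  have "{t. is_hier t \<and> leaves t \<le> Suc N}
      \<subseteq> insert (HNode {#}) (HNode ` bounded_msets {t. is_hier t \<and> leaves t \<le> N} (Suc (Suc N)))"
  proof
    fix t assume t: "t \<in> {t. is_hier t \<and> leaves t \<le> Suc N}"
    obtain M where tM: "t = HNode M" by (cases t)
    have "M \<in> bounded_msets {t. is_hier t \<and> leaves t \<le> N} (Suc (Suc N))" if "M \<noteq> {#}"
    proof -
      have "is_hier c \<and> leaves c \<le> N" if "c \<in># M" for c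
        using t leaves_child_less[of M c] that unfolding tM by auto
      moreover have "count M c < Suc (Suc N)" for c
        using t count_le_leaves[OF \<open>M \<noteq> {#}\<close>, of c] unfolding tM by simp
      ultimately show ?thesis by (auto simp: bounded_msets_def)
    qed
    then show "t \<in> insert (HNode {#}) (HNode ` bounded_msets {t. is_hier t \<and> leaves t \<le> N} (Suc (Suc N)))"
      using tM by blast
  qed
  moreover have "finite (bounded_msets {t. is_hier t \<and> leaves t \<le> N} (Suc (Suc N)))"
    using Suc by (rule finite_bounded_msets)
  ultimately show ?case by (simp add: finite_subset)
qed

text \<open>\<open>log_tail z = (\<Sum>k\<ge>2. z\<^sup>k / k)\<close>, so \<open>exp (H x + G x)\<close> below is Polya's multiset
  exponential \<open>exp (\<Sum>k\<ge>1. H (x\<^sup>k) / k)\<close>.\<close>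

definition log_tail :: "real \<Rightarrow> real" where
  "log_tail z = - ln (1 - z) - z"

lemma exp_add_log_tail: "z < 1 \<Longrightarrow> exp (z + log_tail z) = 1 / (1 - z)"
  by (simp add: log_tail_def exp_minus inverse_eq_divide)

lemma log_tail_nonneg: "z < 1 \<Longrightarrow> 0 \<le> log_tail z"
  using ln_add_one_self_le_self2[of "-z"] by (simp add: log_tail_def)

lemma log_tail_power_le:
  assumes "0 \<le> x" "x < 1" "1 \<le> n"
  shows "log_tail (x ^ n) \<le> (x\<^sup>2) ^ n / (1 - x)"
proof -
  have xn: "0 \<le> x ^ n" "x ^ n < 1" "x ^ n \<le> x"
    using assms by (auto simp: power_less_one_iff intro: power_decreasing[of 1 n x, simplified])
  have "ln (1 / (1 - x ^ n)) \<le> 1 / (1 - x ^ n) - 1"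
    using xn by (intro ln_le_minus_one) auto
  then have "log_tail (x ^ n) \<le> (x ^ n)\<^sup>2 / (1 - x ^ n)"
    using xn by (simp add: log_tail_def ln_div field_simps power2_eq_square)
  also have "\<dots> \<le> (x ^ n)\<^sup>2 / (1 - x)"
    using xn assms by (intro divide_left_mono mult_pos_pos) auto
  finally show ?thesis by (simp add: power_mult[symmetric] mult.commute)
qed

lemma geometric_partial_sum_le: "0 \<le> z \<Longrightarrow> z < 1 \<Longrightarrow> (\<Sum>j<J. z ^ j) \<le> 1 / (1 - (z::real))"
  by (simp add: sum_gp_strict divide_right_mono)

lemma exp_add_minus_mono:
  fixes a b c d :: real
  assumes "0 \<le> a" "a \<le> b" "c \<le> d" "0 \<le> d"
  shows "exp (a + c) - a \<le> exp (b + d) - b"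
proof -
  have "exp (a + d) * (1 + (b - a)) \<le> exp (a + d) * exp (b - a)"
    by (intro mult_left_mono exp_ge_add_one_self) simp
  then have "exp (a + d) + exp (a + d) * (b - a) \<le> exp (b + d)"
    by (simp add: algebra_simps exp_add[symmetric])
  moreover have "b - a \<le> exp (a + d) * (b - a)"
    using assms mult_right_mono[of 1 "exp (a + d)" "b - a"] by simp
  moreover have "exp (a + c) \<le> exp (a + d)"
    using assms by simp
  ultimately show ?thesis by linarith
qed

text \<open>The function \<open>\<lambda>d. E (exp d - 1) - 2 d\<close> vanishes at \<open>0\<close> with slope \<open>E - 2\<close>.\<close>

lemma exp_deviation_below_linear:
  fixes E \<epsilon> :: real
  assumes "0 < \<epsilon>"
  shows exp_deviation_below_linear_neg: "2 < E \<Longrightarrow> \<exists>d. - \<epsilon> < d \<and> d < 0 \<and> E * (exp d - 1) < 2 * d"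
    and exp_deviation_below_linear_pos: "E < 2 \<Longrightarrow> \<exists>d. 0 < d \<and> d < \<epsilon> \<and> E * (exp d - 1) < 2 * d"
proof -
  define f where "f d = E * (exp d - 1) - 2 * d" for d
  have deriv: "DERIV f 0 :> E - 2"
    unfolding f_def by (auto intro!: derivative_eq_intros)
  have f0: "f 0 = 0"
    by (simp add: f_def)
  show "\<exists>d. - \<epsilon> < d \<and> d < 0 \<and> E * (exp d - 1) < 2 * d" if "2 < E"
  proof -
    obtain \<delta> where "0 < \<delta>" and \<delta>: "\<And>t. 0 < t \<Longrightarrow> t < \<delta> \<Longrightarrow> f (0 - t) < f 0"
      using DERIV_pos_inc_left[OF deriv] \<open>2 < E\<close> by force
    have "f (0 - min (\<delta> / 2) (\<epsilon> / 2)) < f 0"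
      using assms \<open>0 < \<delta>\<close> by (intro \<delta>) auto
    then have "f (- min (\<delta> / 2) (\<epsilon> / 2)) < 0"
      using f0 by simp
    then show ?thesis
      using \<open>0 < \<delta>\<close> assms by (intro exI[of _ "- min (\<delta> / 2) (\<epsilon> / 2)"]) (auto simp: f_def)
  qed
  show "\<exists>d. 0 < d \<and> d < \<epsilon> \<and> E * (exp d - 1) < 2 * d" if "E < 2"
  proof -
    obtain \<delta> where "0 < \<delta>" and \<delta>: "\<And>t. 0 < t \<Longrightarrow> t < \<delta> \<Longrightarrow> f (0 + t) < f 0"
      using DERIV_neg_dec_right[OF deriv] \<open>E < 2\<close> by force
    have "f (0 + min (\<delta> / 2) (\<epsilon> / 2)) < f 0"
      using assms \<open>0 < \<delta>\<close> by (intro \<delta>) auto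
    then have "f (min (\<delta> / 2) (\<epsilon> / 2)) < 0"
      using f0 by simp
    then show ?thesis
      using \<open>0 < \<delta>\<close> assms by (intro exI[of _ "min (\<delta> / 2) (\<epsilon> / 2)"]) (auto simp: f_def)
  qed
qed

section \<open>Hierarchies avoiding a fixed hierarchy\<close>

locale hierarchy_avoidance =
  fixes T :: htree and m :: nat
  assumes m_ge_2: "2 \<le> m" and hier_T: "is_hier T" and leaves_T: "leaves T = m"
begin

definition avoiders :: "nat \<Rightarrow> htree set" where
  "avoiders N = {t. is_hier t \<and> leaves t \<le> N \<and> \<not> contains_sub t T}"

definition h :: "nat \<Rightarrow> real" where
  "h n = (if n = 0 then 0 else real (avoid_count T n))"

definition H_upto :: "nat \<Rightarrow> real \<Rightarrow> real" where
  "H_upto N x = (\<Sum>n\<le>N. h n * x ^ n)"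

definition G_upto :: "nat \<Rightarrow> real \<Rightarrow> real" where
  "G_upto N x = (\<Sum>n\<le>N. h n * log_tail (x ^ n))"

definition H :: "real \<Rightarrow> real" where
  "H x = (\<Sum>n. h n * x ^ n)"

definition G :: "real \<Rightarrow> real" where
  "G x = (\<Sum>n. h n * log_tail (x ^ n))"

lemma finite_avoiders: "finite (avoiders N)"
proof -
  have "avoiders N \<subseteq> {t. is_hier t \<and> leaves t \<le> N}"
    by (auto simp: avoiders_def)
  then show ?thesis
    using finite_hierarchies by (rule finite_subset)
qed

lemma h_nonneg: "0 \<le> h n"
  by (simp add: h_def)

lemma h_eq_card:
  assumes "n \<le> N"
  shows "h n = real (card {t \<in> avoiders N. leaves t = n})"
proof (cases "n = 0")
  case True
  have "leaves t \<noteq> 0" for t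
    using leaves_ge_1[of t] by simp
  with True have "{t \<in> avoiders N. leaves t = n} = {}"
    by simp
  with True show ?thesis
    by (metis card.empty h_def of_nat_0)
next
  case False
  then show ?thesis
    using assms by (auto simp: h_def avoid_count_def avoiders_def intro!: arg_cong[where f = card])
qed

lemma sum_avoiders_leaves: "(\<Sum>t\<in>avoiders N. f (leaves t)) = (\<Sum>n\<le>N. h n * f n)"
proof -
  have "(\<Sum>t\<in>avoiders N. f (leaves t)) = (\<Sum>n\<le>N. \<Sum>t\<in>{t \<in> avoiders N. leaves t = n}. f (leaves t))"
    by (rule sum.group[symmetric]) (use finite_avoiders in \<open>auto simp: avoiders_def\<close>)
  also have "\<dots> = (\<Sum>n\<le>N. h n * f n)"
    by (intro sum.cong refl) (simp add: h_eq_card)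
  finally show ?thesis .
qed

lemma H_upto_eq: "H_upto N x = (\<Sum>t\<in>avoiders N. x ^ leaves t)"
  by (simp add: H_upto_def sum_avoiders_leaves)

lemma G_upto_eq: "G_upto N x = (\<Sum>t\<in>avoiders N. log_tail (x ^ leaves t))"
  by (simp add: G_upto_def sum_avoiders_leaves[of "\<lambda>n. log_tail (x ^ n)"])

lemma h_ge_1:
  assumes "2 \<le> n" "n \<noteq> m"
  shows "1 \<le> h n"
proof -
  define star where "star = HNode (replicate_mset n (HNode {#}))"
  have "subtrees star = {star, HNode {#}}" and "leaves star = n"
    using assms(1) by (auto simp: star_def)
  moreover have "T \<noteq> HNode {#}"
    using leaves_T m_ge_2 by auto
  ultimately have "star \<in> {t \<in> avoiders n. leaves t = n}"
    using assms leaves_T by (auto simp: avoiders_def contains_sub_def star_def)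
  moreover have "finite {t \<in> avoiders n. leaves t = n}"
    using finite_avoiders[of n] by simp
  ultimately have "0 < card {t \<in> avoiders n. leaves t = n}"
    using card_gt_0_iff by blast
  then show ?thesis by (simp add: h_eq_card[of n n] Suc_le_eq)
qed

lemma T_eq_node: "T = HNode (children T)"
  by (cases T) simp

lemma children_T_branching:
  assumes "m \<le> Suc K" "m < J"
  shows "children T \<in> branching_msets (avoiders K) J"
proof -
  let ?C = "children T"
  have "?C \<noteq> {#}"
  proof
    assume "?C = {#}"
    then have "leaves T = 1"
      using T_eq_node by (metis leaves.simps)
    with leaves_T m_ge_2 show False by simp
  qed
  then have "2 \<le> size ?C"
    using hier_T T_eq_node is_hier_node_size by metis
  moreover have "c \<in> avoiders K" if c: "c \<in># ?C" for c
  proof -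
    have "leaves c < m"
      using leaves_child_less[of ?C c] hier_T T_eq_node leaves_T c by simp
    moreover have "is_hier c"
      using hier_T T_eq_node c by (metis is_hier.simps)
    ultimately show ?thesis
      using assms(1) leaves_T leaves_le_if_subtree[of T c]
      by (auto simp: avoiders_def contains_sub_def)
  qed
  moreover have "count ?C c < J" for c
    using count_le_leaves[OF \<open>?C \<noteq> {#}\<close>, of c] T_eq_node leaves_T assms(2) by simp
  ultimately show ?thesis by (auto simp: branching_msets_def bounded_msets_def)
qed

lemma node_avoids:
  assumes "M \<in> branching_msets (avoiders K) J" "M \<noteq> children T"
  shows "is_hier (HNode M)" "\<not> contains_sub (HNode M) T"
proof -
  have "2 \<le> size M" and children: "\<And>c. c \<in># M \<Longrightarrow> c \<in> avoiders K"
    using assms(1) by (auto simp: branching_msets_def bounded_msets_def)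
  then show "is_hier (HNode M)" by (auto simp: avoiders_def)
  have "T \<noteq> HNode M"
    using assms(2) T_eq_node by auto
  with children show "\<not> contains_sub (HNode M) T"
    by (auto simp: contains_sub_def avoiders_def)
qed

lemma avoiders_Suc_subset:
  "avoiders (Suc N) \<subseteq> insert (HNode {#}) (HNode ` (branching_msets (avoiders N) (Suc (Suc N)) - {children T}))"
proof
  fix t assume t: "t \<in> avoiders (Suc N)"
  obtain M where tM: "t = HNode M" by (cases t)
  have "M \<in> branching_msets (avoiders N) (Suc (Suc N)) - {children T}" if "M \<noteq> {#}"
  proof -
    have "is_hier (HNode M)" "leaves (HNode M) \<le> Suc N" "\<not> contains_sub (HNode M) T"
      using t tM by (auto simp: avoiders_def)
    then have "c \<in> avoiders N" if "c \<in># M" for c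
      using leaves_child_less[of M c] that by (auto simp: avoiders_def contains_sub_def)
    moreover have "count M c < Suc (Suc N)" for c
      using count_le_leaves[OF \<open>M \<noteq> {#}\<close>, of c] t tM by (simp add: avoiders_def)
    moreover have "2 \<le> size M"
      using t tM \<open>M \<noteq> {#}\<close> is_hier_node_size by (auto simp: avoiders_def)
    moreover have "M \<noteq> children T"
      using t tM T_eq_node subtree_self[of T] by (auto simp: avoiders_def contains_sub_def)
    ultimately show ?thesis by (auto simp: branching_msets_def bounded_msets_def)
  qed
  then show "t \<in> insert (HNode {#}) (HNode ` (branching_msets (avoiders N) (Suc (Suc N)) - {children T}))"
    using tM by blast
qed

lemma sum_branching_weights:
  assumes "2 \<le> J"
  shows "(\<Sum>M\<in>branching_msets (avoiders N) J. x ^ leaves (HNode M))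
    = (\<Prod>s\<in>avoiders N. \<Sum>j<J. (x ^ leaves s) ^ j) - 1 - H_upto N x"
proof -
  have "(\<Sum>M\<in>branching_msets (avoiders N) J. x ^ leaves (HNode M))
      = (\<Sum>M\<in>branching_msets (avoiders N) J. \<Prod>s\<in>#M. x ^ leaves s)"
    by (intro sum.cong refl leaves_node_power) (auto simp: branching_msets_def)
  then show ?thesis
    using sum_prod_mset_branching_msets[OF finite_avoiders assms, of "\<lambda>s. x ^ leaves s"]
    by (simp add: H_upto_eq)
qed

lemma sum_branching_without_T:
  "(\<Sum>M\<in>branching_msets (avoiders N) J - {children T}. (x::real) ^ leaves (HNode M))
    = (\<Sum>M\<in>branching_msets (avoiders N) J. x ^ leaves (HNode M))
      - (if children T \<in> branching_msets (avoiders N) J then x ^ m else 0)"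
proof -
  have "leaves (HNode (children T)) = m"
    using T_eq_node leaves_T by metis
  then show ?thesis
    using finite_branching_msets[OF finite_avoiders] by (simp add: sum_diff1 del: leaves.simps)
qed

lemma prod_avoiders_geometric:
  assumes "0 \<le> x" "x < 1"
  shows "(\<Prod>s\<in>avoiders N. 1 / (1 - x ^ leaves s)) = exp (H_upto N x + G_upto N x)"
proof -
  have "exp (H_upto N x + G_upto N x) = (\<Prod>t\<in>avoiders N. exp (x ^ leaves t + log_tail (x ^ leaves t)))"
    by (simp add: H_upto_eq G_upto_eq sum.distrib[symmetric] exp_sum finite_avoiders)
  also have "\<dots> = (\<Prod>s\<in>avoiders N. 1 / (1 - x ^ leaves s))"
    using assms by (intro prod.cong refl exp_add_log_tail power_leaves_less_1)
  finally show ?thesis ..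
qed

text \<open>The term \<open>x ^ m\<close> accounts for \<open>T\<close> itself, which is excluded from the candidate nodes
  once \<open>m \<le> Suc N\<close>.\<close>

lemma H_upto_Suc_le:
  assumes "0 \<le> x" "x < 1"
  shows "H_upto (Suc N) x + (if m \<le> Suc N then x ^ m else 0)
    \<le> x + exp (H_upto N x + G_upto N x) - 1 - H_upto N x"
proof -
  let ?A = "branching_msets (avoiders N) (Suc (Suc N))"
  have finA: "finite ?A"
    by (rule finite_branching_msets[OF finite_avoiders])
  have "H_upto (Suc N) x = (\<Sum>t\<in>avoiders (Suc N). x ^ leaves t)"
    by (rule H_upto_eq)
  also have "\<dots> \<le> (\<Sum>t\<in>insert (HNode {#}) (HNode ` (?A - {children T})). x ^ leaves t)"
    using assms(1) finA by (intro sum_mono2 avoiders_Suc_subset) auto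
  also have "\<dots> = x + (\<Sum>M\<in>?A - {children T}. x ^ leaves (HNode M))"
    using finA empty_not_branching by (intro sum_leaf_and_nodes) auto
  finally have cover: "H_upto (Suc N) x \<le> x + (\<Sum>M\<in>?A - {children T}. x ^ leaves (HNode M))" .
  have "(if m \<le> Suc N then x ^ m else 0) \<le> (if children T \<in> ?A then x ^ m else 0)"
    using children_T_branching[of N "Suc (Suc N)"] assms(1) by auto
  then have without_T: "(\<Sum>M\<in>?A - {children T}. x ^ leaves (HNode M)) + (if m \<le> Suc N then x ^ m else 0)
      \<le> (\<Prod>s\<in>avoiders N. \<Sum>j<Suc (Suc N). (x ^ leaves s) ^ j) - 1 - H_upto N x"
    using sum_branching_without_T sum_branching_weights[of "Suc (Suc N)"] by simp
  have "(\<Prod>s\<in>avoiders N. \<Sum>j<Suc (Suc N). (x ^ leaves s) ^ j) \<le> (\<Prod>s\<in>avoiders N. 1 / (1 - x ^ leaves s))"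
    using assms power_leaves_less_1
    by (intro prod_mono conjI sum_nonneg geometric_partial_sum_le) auto
  with cover without_T prod_avoiders_geometric[OF assms, of N] show ?thesis by linarith
qed

lemma H_upto_le_H: "summable (\<lambda>n. h n * x ^ n) \<Longrightarrow> 0 \<le> x \<Longrightarrow> H_upto N x \<le> H x"
  unfolding H_upto_def H_def by (intro sum_le_suminf) (auto intro!: mult_nonneg_nonneg h_nonneg)

lemma sum_avoiding_le_H:
  assumes "finite F" "\<And>t. t \<in> F \<Longrightarrow> is_hier t \<and> \<not> contains_sub t T"
    and "0 \<le> x" "summable (\<lambda>n. h n * x ^ n)"
  shows "(\<Sum>t\<in>F. x ^ leaves t) \<le> H x"
proof -
  have "F \<subseteq> avoiders (\<Sum>t\<in>F. leaves t)"
    using assms(1,2) by (auto simp: avoiders_def intro: member_le_sum)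
  then have "(\<Sum>t\<in>F. x ^ leaves t) \<le> H_upto (\<Sum>t\<in>F. leaves t) x"
    unfolding H_upto_eq using assms(3) by (intro sum_mono2 finite_avoiders) auto
  also have "\<dots> \<le> H x"
    using assms(3,4) by (rule H_upto_le_H[rotated])
  finally show ?thesis .
qed

lemma H_ge_truncated:
  assumes "m \<le> Suc K" "m < J" "0 \<le> x" "summable (\<lambda>n. h n * x ^ n)"
  shows "x + (\<Prod>s\<in>avoiders K. \<Sum>j<J. (x ^ leaves s) ^ j) - 1 - H_upto K x - x ^ m \<le> H x"
proof -
  let ?A = "branching_msets (avoiders K) J"
  have finA: "finite ?A"
    by (rule finite_branching_msets[OF finite_avoiders])
  have "x + (\<Sum>M\<in>?A - {children T}. x ^ leaves (HNode M))
      = (\<Sum>t\<in>insert (HNode {#}) (HNode ` (?A - {children T})). x ^ leaves t)"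
    using finA empty_not_branching by (intro sum_leaf_and_nodes[symmetric]) auto
  also have "\<dots> \<le> H x"
  proof (rule sum_avoiding_le_H)
    fix t assume "t \<in> insert (HNode {#}) (HNode ` (?A - {children T}))"
    then show "is_hier t \<and> \<not> contains_sub t T"
      using node_avoids leaves_T m_ge_2 by (auto simp: contains_sub_def)
  qed (use finA assms in auto)
  finally show ?thesis
    using sum_branching_without_T sum_branching_weights[of J] children_T_branching[OF assms(1,2)]
      assms(2) m_ge_2 by simp
qed

section \<open>The functional equation\<close>

lemma h_0: "h 0 = 0"
  by (simp add: h_def)

lemma H_upto_Suc: "H_upto (Suc N) x = H_upto N x + h (Suc N) * x ^ Suc N"
  by (simp add: H_upto_def)

lemma H_upto_nonneg: "0 \<le> x \<Longrightarrow> 0 \<le> H_upto N x"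
  unfolding H_upto_def by (intro sum_nonneg mult_nonneg_nonneg h_nonneg) auto

lemma H_upto_mono: "N \<le> N' \<Longrightarrow> 0 \<le> x \<Longrightarrow> H_upto N x \<le> H_upto N' x"
  unfolding H_upto_def by (intro sum_mono2) (auto intro!: mult_nonneg_nonneg h_nonneg)

lemma log_tail_term_nonneg: "0 \<le> x \<Longrightarrow> x < 1 \<Longrightarrow> 0 \<le> h n * log_tail (x ^ n)"
  by (cases "n = 0") (auto simp: h_0 power_less_one_iff intro!: mult_nonneg_nonneg h_nonneg log_tail_nonneg)

lemma log_tail_term_le:
  assumes "0 \<le> x" "x < 1"
  shows "h n * log_tail (x ^ n) \<le> h n * (x\<^sup>2) ^ n / (1 - x)"
proof (cases "n = 0")
  case False
  then show ?thesis
    using mult_left_mono[OF log_tail_power_le[OF assms, of n] h_nonneg[of n]] by simp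
qed (simp add: h_0)

lemma summable_G:
  assumes "0 \<le> x" "x < 1" "summable (\<lambda>n. h n * (x\<^sup>2) ^ n)"
  shows "summable (\<lambda>n. h n * log_tail (x ^ n))"
proof (rule summable_comparison_test)
  show "\<exists>N. \<forall>n\<ge>N. norm (h n * log_tail (x ^ n)) \<le> h n * (x\<^sup>2) ^ n / (1 - x)"
    using log_tail_term_le[OF assms(1,2)] log_tail_term_nonneg[OF assms(1,2)] by auto
  show "summable (\<lambda>n. h n * (x\<^sup>2) ^ n / (1 - x))"
    using assms(3) by (rule summable_divide)
qed

lemma G_upto_le_G: "summable (\<lambda>n. h n * log_tail (x ^ n)) \<Longrightarrow> 0 \<le> x \<Longrightarrow> x < 1 \<Longrightarrow> G_upto N x \<le> G x"
  unfolding G_upto_def G_def by (intro sum_le_suminf) (auto intro: log_tail_term_nonneg)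

lemma G_upto_nonneg: "0 \<le> x \<Longrightarrow> x < 1 \<Longrightarrow> 0 \<le> G_upto N x"
  unfolding G_upto_def by (intro sum_nonneg log_tail_term_nonneg)

lemma G_nonneg: "summable (\<lambda>n. h n * log_tail (x ^ n)) \<Longrightarrow> 0 \<le> x \<Longrightarrow> x < 1 \<Longrightarrow> 0 \<le> G x"
  unfolding G_def by (intro suminf_nonneg) (auto intro: log_tail_term_nonneg)

lemma G_upto_le_H_upto:
  assumes "0 \<le> x" "x < 1"
  shows "G_upto N x \<le> H_upto N x * (x / (1 - x))"
  unfolding G_upto_def H_upto_def sum_distrib_right
proof (rule sum_mono)
  fix n
  show "h n * log_tail (x ^ n) \<le> h n * x ^ n * (x / (1 - x))"
  proof (cases "n = 0")
    case False
    have "(x\<^sup>2) ^ n / (1 - x) = x ^ n * (x ^ n / (1 - x))"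
      by (simp add: power_mult[symmetric] power2_eq_square power_mult_distrib)
    also have "\<dots> \<le> x ^ n * (x / (1 - x))"
      using assms False power_decreasing[of 1 n x] by (intro mult_left_mono divide_right_mono) auto
    finally have "h n * ((x\<^sup>2) ^ n / (1 - x)) \<le> h n * (x ^ n * (x / (1 - x)))"
      using h_nonneg by (rule mult_left_mono)
    then show ?thesis
      using log_tail_term_le[OF assms, of n] by (simp add: mult.assoc)
  qed (simp add: h_0)
qed

lemma H_upto_tendsto: "summable (\<lambda>n. h n * x ^ n) \<Longrightarrow> (\<lambda>N. H_upto N x) \<longlonglongrightarrow> H x"
  unfolding H_upto_def H_def by (rule summable_LIMSEQ')

lemma G_upto_tendsto: "summable (\<lambda>n. h n * log_tail (x ^ n)) \<Longrightarrow> (\<lambda>N. G_upto N x) \<longlonglongrightarrow> G x"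
  unfolding G_upto_def G_def by (rule summable_LIMSEQ')

lemma H_upto_bounded:
  assumes "\<And>N. H_upto N x \<le> y" "0 \<le> x"
  shows "summable (\<lambda>n. h n * x ^ n)" "H x \<le> y"
proof -
  have bounded: "(\<Sum>i<n. h i * x ^ i) \<le> y" for n
  proof -
    have "(\<Sum>i<n. h i * x ^ i) \<le> H_upto n x"
      unfolding H_upto_def using assms(2) by (intro sum_mono2) (auto intro!: mult_nonneg_nonneg h_nonneg)
    then show ?thesis
      using assms(1)[of n] by linarith
  qed
  show summable: "summable (\<lambda>n. h n * x ^ n)"
    using assms(2) bounded by (intro summableI_nonneg_bounded) (auto intro!: mult_nonneg_nonneg h_nonneg)
  show "H x \<le> y"
    unfolding H_def by (rule suminf_le_const[OF summable bounded])
qed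

lemma H_gt_H_upto:
  assumes "0 < x" "summable (\<lambda>n. h n * x ^ n)"
  shows "H_upto (m - 1) x < H x"
proof -
  have "H_upto (m - 1) x < H_upto (m - 1) x + h (m + 1) * x ^ (m + 1)"
    using h_ge_1[of "m + 1"] m_ge_2 assms(1) by (simp add: less_le_trans[OF _ mult_left_mono])
  also have "\<dots> \<le> H_upto (m + 1) x"
    using H_upto_mono[of "m - 1" m x] H_upto_Suc[of m x] assms(1) by simp
  also have "\<dots> \<le> H x"
    using assms by (intro H_upto_le_H) auto
  finally show ?thesis .
qed

lemma H_ge_exp_truncated:
  assumes "m \<le> Suc K" "0 \<le> x" "x < 1" "summable (\<lambda>n. h n * x ^ n)"
  shows "x + exp (H_upto K x + G_upto K x) - 1 - H_upto K x - x ^ m \<le> H x"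
proof -
  have "(\<lambda>J. x + (\<Prod>s\<in>avoiders K. \<Sum>j<J. (x ^ leaves s) ^ j) - 1 - H_upto K x - x ^ m)
      \<longlonglongrightarrow> x + (\<Prod>s\<in>avoiders K. 1 / (1 - x ^ leaves s)) - 1 - H_upto K x - x ^ m"
  proof (intro tendsto_intros)
    fix s
    have "norm (x ^ leaves s) < 1"
      using power_leaves_less_1[OF assms(2,3)] assms(2) by simp
    then show "(\<lambda>J. \<Sum>j<J. (x ^ leaves s) ^ j) \<longlonglongrightarrow> 1 / (1 - x ^ leaves s)"
      using geometric_sums sums_def by blast
  qed
  moreover have "\<forall>\<^sub>F J in sequentially.
      x + (\<Prod>s\<in>avoiders K. \<Sum>j<J. (x ^ leaves s) ^ j) - 1 - H_upto K x - x ^ m \<le> H x"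
    using eventually_gt_at_top[of m] by (rule eventually_mono) (rule H_ge_truncated[OF assms(1) _ assms(2,4)])
  ultimately have "x + (\<Prod>s\<in>avoiders K. 1 / (1 - x ^ leaves s)) - 1 - H_upto K x - x ^ m \<le> H x"
    by (rule tendsto_upperbound) simp
  then show ?thesis
    using prod_avoiders_geometric[OF assms(2,3), of K] by simp
qed

theorem functional_equation:
  assumes "0 \<le> x" "x < 1" "summable (\<lambda>n. h n * x ^ n)" "summable (\<lambda>n. h n * log_tail (x ^ n))"
  shows "2 * H x = x - x ^ m + exp (H x + G x) - 1"
proof -
  have lim: "(\<lambda>N. x + exp (H_upto N x + G_upto N x) - 1 - H_upto N x) \<longlonglongrightarrow> x + exp (H x + G x) - 1 - H x"
    using H_upto_tendsto[OF assms(3)] G_upto_tendsto[OF assms(4)] by (intro tendsto_intros)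
  have "H x + x ^ m \<le> x + exp (H x + G x) - 1 - H x"
  proof (rule LIMSEQ_le[OF _ lim])
    show "(\<lambda>N. H_upto (Suc N) x + x ^ m) \<longlonglongrightarrow> H x + x ^ m"
      using LIMSEQ_Suc[OF H_upto_tendsto[OF assms(3)]] by (intro tendsto_intros)
    show "\<exists>K. \<forall>N\<ge>K. H_upto (Suc N) x + x ^ m \<le> x + exp (H_upto N x + G_upto N x) - 1 - H_upto N x"
    proof (intro exI allI impI)
      fix N assume "m \<le> N"
      then show "H_upto (Suc N) x + x ^ m \<le> x + exp (H_upto N x + G_upto N x) - 1 - H_upto N x"
        using H_upto_Suc_le[OF assms(1,2), of N] by simp
    qed
  qed
  moreover have "x + exp (H x + G x) - 1 - H x - x ^ m \<le> H x"
  proof (rule tendsto_upperbound)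
    show "(\<lambda>N. x + exp (H_upto N x + G_upto N x) - 1 - H_upto N x - x ^ m) \<longlonglongrightarrow> x + exp (H x + G x) - 1 - H x - x ^ m"
      using H_upto_tendsto[OF assms(3)] G_upto_tendsto[OF assms(4)] by (intro tendsto_intros)
    show "\<forall>\<^sub>F N in sequentially. x + exp (H_upto N x + G_upto N x) - 1 - H_upto N x - x ^ m \<le> H x"
      using eventually_ge_at_top[of m] by (rule eventually_mono) (rule H_ge_exp_truncated[OF _ assms(1-3)], simp)
  qed simp
  ultimately show ?thesis by linarith
qed

text \<open>The hypothesis on \<open>H_upto (m - 1) x\<close> covers the steps of the induction in which
  \<open>H_upto_Suc_le\<close> lacks the term \<open>x ^ m\<close>.\<close>

lemma H_le_supersolution:
  assumes "0 \<le> x" "x < 1" "summable (\<lambda>n. h n * log_tail (x ^ n))"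
    and "H_upto (m - 1) x \<le> y" "x - x ^ m + exp (y + G x) - 1 \<le> 2 * y"
  shows "summable (\<lambda>n. h n * x ^ n)" "H x \<le> y"
proof -
  have "H_upto N x \<le> y" for N
  proof (induction N)
    case 0
    then show ?case using H_upto_mono[of 0 "m - 1" x] assms(1,4) by simp
  next
    case (Suc N)
    show ?case
    proof (cases "m \<le> Suc N")
      case False
      then have "Suc N \<le> m - 1" by simp
      then show ?thesis using H_upto_mono[of "Suc N" "m - 1" x] assms(1,4) by simp
    next
      case True
      have "exp (H_upto N x + G_upto N x) - H_upto N x \<le> exp (y + G x) - y"
        using assms(1-3) Suc.IH
        by (intro exp_add_minus_mono H_upto_nonneg G_upto_le_G G_nonneg)
      with H_upto_Suc_le[OF assms(1,2), of N] True assms(5) show ?thesis by simp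
    qed
  qed
  then show "summable (\<lambda>n. h n * x ^ n)" "H x \<le> y"
    using H_upto_bounded assms(1) by blast+
qed

text \<open>Otherwise \<open>H x - d\<close> for a small \<open>d > 0\<close> would be a smaller supersolution.\<close>

lemma exp_HG_le_2:
  assumes "0 < x" "x < 1" "summable (\<lambda>n. h n * x ^ n)" "summable (\<lambda>n. h n * log_tail (x ^ n))"
  shows "exp (H x + G x) \<le> 2"
proof (rule ccontr)
  define E where "E = exp (H x + G x)"
  assume "\<not> exp (H x + G x) \<le> 2"
  then have "2 < E" by (simp add: E_def)
  then obtain d where d: "H_upto (m - 1) x - H x < d" "d < 0" "E * (exp d - 1) < 2 * d"
    using exp_deviation_below_linear_neg[of "H x - H_upto (m - 1) x" E] H_gt_H_upto[OF assms(1,3)]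
    by auto
  have "exp (H x + d + G x) = E * exp d"
    by (simp add: E_def exp_add[symmetric] algebra_simps)
  then have super: "x - x ^ m + exp (H x + d + G x) - 1 \<le> 2 * (H x + d)"
    using functional_equation[OF _ assms(2-4)] assms(1) d(3) by (simp add: E_def algebra_simps)
  have "H_upto (m - 1) x \<le> H x + d"
    using d(1) by simp
  then have "H x \<le> H x + d"
    using assms(1) by (intro H_le_supersolution(2)[OF _ assms(2,4) _ super]) auto
  with d(2) show False by simp
qed

lemma summable_at_one_tenth: "summable (\<lambda>n. h n * (1 / 10) ^ n)"
proof -
  define x :: real where "x = 1 / 10"
  have exp_bound: "exp (1 / 5 + 1 / 45 :: real) \<le> 9 / 7"
  proof -
    have "7 / 9 \<le> exp (- (2 / 9) :: real)"
      using exp_ge_add_one_self[of "- (2 / 9) :: real"] by simp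
    then have "exp (2 / 9 :: real) * (7 / 9) \<le> 1"
      using mult_left_mono[of "7 / 9" "exp (- (2 / 9))" "exp (2 / 9 :: real)"]
      by (simp add: exp_minus)
    then show ?thesis by simp
  qed
  have "H_upto N x \<le> 1 / 5" for N
  proof (induction N)
    case 0
    then show ?case by (simp add: H_upto_def h_0)
  next
    case (Suc N)
    have "G_upto N x \<le> H_upto N x * (1 / 9)"
      using G_upto_le_H_upto[of x N] by (simp add: x_def)
    then have "exp (H_upto N x + G_upto N x) - H_upto N x \<le> exp (1 / 5 + 1 / 45) - 1 / 5"
      using Suc.IH H_upto_nonneg[of x N] G_upto_nonneg[of x N]
      by (intro exp_add_minus_mono) (auto simp: x_def)
    moreover have "0 \<le> (if m \<le> Suc N then x ^ m else 0)"
      by (simp add: x_def)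
    ultimately show ?case
      using H_upto_Suc_le[of x N] exp_bound by (simp add: x_def)
  qed
  then have "summable (\<lambda>n. h n * x ^ n)"
    by (rule H_upto_bounded(1)) (simp add: x_def)
  then show ?thesis by (simp add: x_def)
qed

lemma isCont_G:
  assumes "0 < x" "x < r" "r < 1" "summable (\<lambda>n. h n * (r\<^sup>2) ^ n)"
  shows "isCont G x"
proof -
  have "uniform_limit {0..r} (\<lambda>N x. \<Sum>n<N. h n * log_tail (x ^ n)) G sequentially"
    unfolding G_def
  proof (rule Weierstrass_m_test)
    fix n and y :: real assume y: "y \<in> {0..r}"
    then have "h n * log_tail (y ^ n) \<le> h n * (y\<^sup>2) ^ n / (1 - y)"
      using assms by (intro log_tail_term_le) auto
    also have "\<dots> \<le> h n * (r\<^sup>2) ^ n / (1 - r)"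
    proof -
      have "(y\<^sup>2) ^ n / (1 - y) \<le> (r\<^sup>2) ^ n / (1 - r)"
        using y assms by (intro frac_le power_mono) auto
      from mult_left_mono[OF this h_nonneg[of n]] show ?thesis
        by simp
    qed
    finally show "norm (h n * log_tail (y ^ n)) \<le> h n * (r\<^sup>2) ^ n / (1 - r)"
      using log_tail_term_nonneg[of y n] y assms by simp
  next
    show "summable (\<lambda>n. h n * (r\<^sup>2) ^ n / (1 - r))"
      using assms(4) by (rule summable_divide)
  qed
  moreover have "continuous_on {0..r} (\<lambda>x. h n * log_tail (x ^ n))" for n
  proof (cases "n = 0")
    case False
    have "1 - y ^ n \<noteq> 0" if "y \<in> {0..r}" for y
    proof -
      have "y < 1" using that assms by simp
      then have "y ^ n < 1" using that False by (simp add: power_less_one_iff)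
      then show ?thesis by simp
    qed
    then show ?thesis
      unfolding log_tail_def by (intro continuous_intros) auto
  qed simp
  then have "continuous_on {0..r} (\<lambda>x. \<Sum>n<N. h n * log_tail (x ^ n))" for N
    by (intro continuous_on_sum) auto
  ultimately have "continuous_on {0..r} G"
    by (intro uniform_limit_theorem[of _ "\<lambda>N x. \<Sum>n<N. h n * log_tail (x ^ n)"]) auto
  then show ?thesis
    using assms by (intro continuous_on_interior[of "{0..r}"]) auto
qed

section \<open>The radius of convergence\<close>

lemma summable_below_radius:
  assumes "0 \<le> x" "ereal x < conv_radius h"
  shows "summable (\<lambda>n. h n * x ^ n)"
  using summable_in_conv_radius[of x h] assms by simp

lemma H_le_1:
  assumes "0 < x" "x < 1" "ereal x < conv_radius h"
  shows "summable (\<lambda>n. h n * x ^ n)" "H x \<le> 1"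
proof -
  show summable: "summable (\<lambda>n. h n * x ^ n)"
    using assms by (intro summable_below_radius) auto
  have "x\<^sup>2 < x"
    using assms by (simp add: power2_eq_square)
  then have "ereal (x\<^sup>2) < conv_radius h"
    using assms(3) by (simp add: order.strict_trans[of _ "ereal x"])
  then have "summable (\<lambda>n. h n * (x\<^sup>2) ^ n)"
    by (intro summable_below_radius) auto
  then have summable_G: "summable (\<lambda>n. h n * log_tail (x ^ n))"
    using assms by (intro summable_G) auto
  have "1 + H x \<le> exp (H x)"
    by (rule exp_ge_add_one_self)
  also have "\<dots> \<le> exp (H x + G x)"
    using G_nonneg[OF summable_G] assms by simp
  also have "\<dots> \<le> 2"
    using exp_HG_le_2[OF assms(1,2) summable summable_G] .
  finally show "H x \<le> 1" by simp
qed

lemma H_upto_le_1: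
  assumes "0 < r" "r \<le> 1" "ereal r \<le> conv_radius h"
  shows "H_upto N r \<le> 1"
proof (rule tendsto_upperbound)
  show "(H_upto N \<longlongrightarrow> H_upto N r) (at_left r)"
    unfolding H_upto_def by (intro tendsto_intros)
  have "H_upto N x \<le> 1" if "0 < x" "x < r" for x
  proof -
    have "ereal x < conv_radius h"
      using that assms(3) by (simp add: order_less_le_trans[of _ "ereal r"])
    then show ?thesis
      using H_le_1[of x] H_upto_le_H[of x N] that assms(2) by fastforce
  qed
  then show "\<forall>\<^sub>F x in at_left r. H_upto N x \<le> 1"
    unfolding eventually_at_left_field using assms(1) by blast
qed simp

lemma conv_radius_less_1: "conv_radius h < 1"
proof (rule ccontr)
  assume "\<not> conv_radius h < 1"
  then have "H_upto (m + 2) 1 \<le> 1"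
    by (intro H_upto_le_1) (auto simp: not_less one_ereal_def)
  moreover have "h (m + 1) + h (m + 2) \<le> H_upto (m + 2) 1"
  proof -
    have "(\<Sum>n\<in>{m + 1, m + 2}. h n) \<le> (\<Sum>n\<le>m + 2. h n)"
      by (intro sum_mono2) (auto simp: h_nonneg)
    then show ?thesis by (simp add: H_upto_def)
  qed
  moreover have "1 \<le> h (m + 1)" "1 \<le> h (m + 2)"
    using m_ge_2 by (auto intro: h_ge_1)
  ultimately show False by linarith
qed

lemma conv_radius_ge_one_tenth: "ereal (1 / 10) \<le> conv_radius h"
  using conv_radius_geI[OF summable_at_one_tenth] by simp

lemma summable_beyond_strict_supersolution:
  assumes "0 < \<rho>" "\<rho> < r" "r < 1" "summable (\<lambda>n. h n * (r\<^sup>2) ^ n)"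
    and "H_upto (m - 1) \<rho> < y" "\<rho> - \<rho> ^ m + exp (y + G \<rho>) - 1 < 2 * y"
  shows "\<exists>x > \<rho>. summable (\<lambda>n. h n * x ^ n)"
proof -
  define \<Phi> where "\<Phi> x = x - x ^ m + exp (y + G x) - 1 - 2 * y" for x
  have "isCont G \<rho>"
    using assms(1-4) by (rule isCont_G)
  then have "isCont \<Phi> \<rho>"
    unfolding \<Phi>_def by (intro continuous_intros)
  moreover have "\<Phi> \<rho> < 0"
    using assms(6) by (simp add: \<Phi>_def)
  ultimately have "\<forall>\<^sub>F x in at \<rho>. \<Phi> x < 0"
    by (rule order_tendstoD(2)[OF isContD])
  then have "\<forall>\<^sub>F x in at_right \<rho>. \<Phi> x < 0"
    by (simp add: eventually_at_split)
  moreover have "\<forall>\<^sub>F x in at \<rho>. H_upto (m - 1) x < y"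
    using assms(5) by (intro order_tendstoD(2)[OF isContD]) (auto simp: H_upto_def)
  then have "\<forall>\<^sub>F x in at_right \<rho>. H_upto (m - 1) x < y"
    by (simp add: eventually_at_split)
  moreover have "\<forall>\<^sub>F x in at_right \<rho>. x < r"
    using assms(2) eventually_at_right_field by blast
  ultimately have "\<forall>\<^sub>F x in at_right \<rho>. \<Phi> x < 0 \<and> H_upto (m - 1) x < y \<and> x < r \<and> \<rho> < x"
    using eventually_at_right_less[of \<rho>] by (intro eventually_conj)
  then obtain x where x: "\<Phi> x < 0" "H_upto (m - 1) x < y" "x < r" "\<rho> < x"
    using eventually_happens'[of "at_right \<rho>"] by auto
  have "summable (\<lambda>n. h n * (x\<^sup>2) ^ n)"
  proof (rule summable_comparison_test'[OF assms(4)])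
    fix n
    have "(x\<^sup>2) ^ n \<le> (r\<^sup>2) ^ n"
      using x(3,4) assms(1) by (intro power_mono) auto
    then show "norm (h n * (x\<^sup>2) ^ n) \<le> h n * (r\<^sup>2) ^ n"
      using h_nonneg[of n] by (simp add: mult_left_mono)
  qed
  then have "summable (\<lambda>n. h n * x ^ n)"
    using x assms(1,3) by (intro H_le_supersolution(1)[of x y] summable_G) (auto simp: \<Phi>_def)
  with x(4) show ?thesis by blast
qed

text \<open>Otherwise \<open>H \<rho> + d\<close> for a small \<open>d > 0\<close> is a strict supersolution at \<open>\<rho>\<close>.\<close>

lemma exp_HG_ge_2_at_radius:
  assumes "conv_radius h = ereal \<rho>" "0 < \<rho>" "\<rho> < 1" "summable (\<lambda>n. h n * \<rho> ^ n)"
  shows "2 \<le> exp (H \<rho> + G \<rho>)"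
proof (rule ccontr)
  define E where "E = exp (H \<rho> + G \<rho>)"
  assume "\<not> 2 \<le> exp (H \<rho> + G \<rho>)"
  then obtain d where d: "0 < d" "E * (exp d - 1) < 2 * d"
    using exp_deviation_below_linear_pos[of 1 E] by (auto simp: E_def)
  have "\<rho>\<^sup>2 < \<rho>"
    using assms by (simp add: power2_eq_square)
  then obtain r where r: "\<rho> < r" "r < sqrt \<rho>"
    using real_less_rsqrt dense by blast
  have "sqrt \<rho> < 1"
    using assms by simp
  with r(2) have "r < 1"
    by linarith
  have "r\<^sup>2 < \<rho>"
    using r assms power_strict_mono[of r "sqrt \<rho>" 2] by auto
  then have summable_r2: "summable (\<lambda>n. h n * (r\<^sup>2) ^ n)"
    using assms(1) by (intro summable_below_radius) auto
  have "\<rho>\<^sup>2 \<le> r\<^sup>2"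
    using r assms by (intro power_mono) auto
  then have "summable (\<lambda>n. h n * log_tail (\<rho> ^ n))"
    using \<open>r\<^sup>2 < \<rho>\<close> assms by (intro summable_G summable_below_radius) auto
  then have "\<rho> - \<rho> ^ m + exp (H \<rho> + d + G \<rho>) - 1 < 2 * (H \<rho> + d)"
    using functional_equation[of \<rho>] assms d(2) by (simp add: E_def exp_add algebra_simps)
  moreover have "H_upto (m - 1) \<rho> < H \<rho> + d"
    using H_upto_le_H[OF assms(4), of "m - 1"] assms(2) d(1) by linarith
  ultimately obtain x where "\<rho> < x" "summable (\<lambda>n. h n * x ^ n)"
    using summable_beyond_strict_supersolution[OF assms(2) r(1) \<open>r < 1\<close> summable_r2] by blast
  then show False
    using conv_radius_geI[of h x] assms(1,2) by simp
qed

theorem H_at_conv_radius: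
  defines "\<rho> \<equiv> real_of_ereal (conv_radius h)"
  shows "(\<lambda>n. h n * \<rho> ^ n) sums ((1 + \<rho> - \<rho> ^ m) / 2)"
proof -
  have radius: "conv_radius h = ereal \<rho>" "1 / 10 \<le> \<rho>" "\<rho> < 1"
    using conv_radius_ge_one_tenth conv_radius_less_1 unfolding \<rho>_def
    by (cases "conv_radius h"; simp)+
  have summable: "summable (\<lambda>n. h n * \<rho> ^ n)"
    using H_upto_le_1[of \<rho>] radius by (intro H_upto_bounded(1)[of \<rho> 1]) auto
  have "\<rho>\<^sup>2 < \<rho>"
    using radius by (simp add: power2_eq_square)
  then have summable_G: "summable (\<lambda>n. h n * log_tail (\<rho> ^ n))"
    using radius by (intro summable_G summable_below_radius) auto
  have "exp (H \<rho> + G \<rho>) = 2"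
    using exp_HG_le_2[OF _ _ summable summable_G] exp_HG_ge_2_at_radius[OF _ _ _ summable] radius
    by (intro antisym) auto
  then have H_at_radius: "H \<rho> = (1 + \<rho> - \<rho> ^ m) / 2"
    using functional_equation[OF _ _ summable summable_G] radius by simp
  have "(\<lambda>n. h n * \<rho> ^ n) sums H \<rho>"
    unfolding H_def using summable by (rule summable_sums)
  then show ?thesis
    unfolding H_at_radius .
qed

end

theorem lemma3p5:
  fixes T :: htree and m :: nat
  assumes "m \<ge> 2" and "is_hier T" and "leaves T = m"
  defines "H \<equiv> (\<lambda>n. if n = 0 then 0 else real (avoid_count T n))"
  defines "\<rho> \<equiv> real_of_ereal (conv_radius H)"
  shows "(\<lambda>n. H n * \<rho> ^ n) sums ((1 + \<rho> - \<rho> ^ m) / 2)"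
proof -
  \<comment> \<open>after the interpretation, \<open>H_def\<close> denotes the locale's definition of the series \<open>H\<close>\<close>
  note coefficients_def = H_def
  interpret hierarchy_avoidance T m
    using assms(1-3) by unfold_locales
  have H_eq: "H = h"
    unfolding coefficients_def h_def ..
  show ?thesis
    unfolding \<rho>_def H_eq by (rule H_at_conv_radius)
qed

end
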